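(* If $l = 1$, then the hypergraph $\mathcal{H}$ (defined in the context) is $C_3$-free, i.e. there do not exist three distinct edges $E_1,E_2,E_3$ of $\mathcal{H}$ and three distinct vertices $v_1,v_2,v_3$ with $\{v_1,v_2\}\subseteq E_1$, $\{v_2,v_3\}\subseteq E_2$, $\{v_3,v_1\}\subseteq E_3$.
   Context: Let $r \geq 2$ and $l \geq 1$ be integers and $q$ a power of an odd prime. Let $\alpha_1, \dots, \alpha_r$ be distinct elements of $\mathbb{F}_q$, and let $m_1, \dots, m_l$ be distinct elements of $\mathbb{F}_q^* = \mathbb{F}_q\setminus\{0\}$ such that $m_s(\alpha_k - \alpha_i) \neq m_t(\alpha_k - \alpha_j)$ whenever $1 \leq s,t \leq l$ and $i,j,k$ are distinct integers in $\{1,\dots,r\}$. For $1 \leq i \leq r$ let $V_i = \mathbb{F}_q \times \mathbb{F}_q \times \{i\}$. For $x,y \in \mathbb{F}_q$, $a \in \mathbb{F}_q^*$, $s \in \{1,\dots,l\}$ let \[ e(x,y,a,m_s) = \{(x + \alpha_i m_s a,\; y + \alpha_i m_s a^2,\; i) : 1 \leq i \leq r\}. \] $\mathcal{H}$ is the $r$-uniform hypergraph with vertex set $V_1 \cup \dots \cup V_r$ and edge set $\{e(x,y,a,m_s) : x,y \in \mathbb{F}_q,\ a \in \mathbb{F}_q^*,\ 1 \leq s \leq l\}$. A hypergraph is $C_3$-free if it contains no Berge triangle (three distinct edges and three distinct vertices as described in the claim). *)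

theory Defs
  imports "HOL-Computational_Algebra.Primes"
begin

definition hedge :: "(nat \<Rightarrow> 'a::field) \<Rightarrow> nat \<Rightarrow> 'a \<Rightarrow> 'a \<Rightarrow> 'a \<Rightarrow> 'a \<Rightarrow> ('a \<times> 'a \<times> nat) set" where
  "hedge \<alpha> r x y a ms = {(x + \<alpha> i * ms * a, y + \<alpha> i * ms * a ^ 2, i) | i. i \<in> {1..r}}"

definition hedges :: "(nat \<Rightarrow> 'a::field) \<Rightarrow> nat \<Rightarrow> (nat \<Rightarrow> 'a) \<Rightarrow> nat \<Rightarrow> ('a \<times> 'a \<times> nat) set set" where
  "hedges \<alpha> r m l = {hedge \<alpha> r x y a (m s) | x y a s. a \<noteq> 0 \<and> s \<in> {1..l}}"

definition berge_C3_free :: "'v set set \<Rightarrow> bool" where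
  "berge_C3_free E \<longleftrightarrow>
     \<not> (\<exists>E1 E2 E3 v1 v2 v3. E1 \<in> E \<and> E2 \<in> E \<and> E3 \<in> E \<and>
          E1 \<noteq> E2 \<and> E2 \<noteq> E3 \<and> E1 \<noteq> E3 \<and>
          v1 \<noteq> v2 \<and> v2 \<noteq> v3 \<and> v1 \<noteq> v3 \<and>
          {v1, v2} \<subseteq> E1 \<and> {v2, v3} \<subseteq> E2 \<and> {v3, v1} \<subseteq> E3)"

end

theory Submission
  imports Defs
begin

text \<open>With a single slope \<open>\<mu> = m 1\<close>, the vertex of layer \<open>i\<close> of the edge with parameters
  \<open>(x, y, a)\<close> is \<open>(x + c\<^sub>i a, y + c\<^sub>i a\<^sup>2)\<close> with \<open>c\<^sub>i = \<alpha>\<^sub>i \<mu>\<close>. Going around a Berge triangle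
  and eliminating \<open>x\<close> resp. \<open>y\<close> yields one linear relation between the differences of the
  \<open>a\<close>'s and the same relation for the differences of the \<open>a\<^sup>2\<close>'s. Together they force the
  three edges to have the same \<open>a\<close>; but two edges with the same \<open>a\<close> that share a vertex
  coincide, so two of the three edges are equal.\<close>

lemma mem_hedge_iff:
  "(u, w, i) \<in> hedge \<alpha> r x y a \<mu> \<longleftrightarrow>
     i \<in> {1..r} \<and> u = x + \<alpha> i * \<mu> * a \<and> w = y + \<alpha> i * \<mu> * a ^ 2"
  by (auto simp: hedge_def)

lemma hedge_eq_if_common_vertex:
  assumes "v \<in> hedge \<alpha> r x y a \<mu>" "v \<in> hedge \<alpha> r x' y' a \<mu>"
  shows "hedge \<alpha> r x y a \<mu> = hedge \<alpha> r x' y' a \<mu>"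
  using assms by (cases v) (simp add: mem_hedge_iff)

lemma triangle_telescope:
  fixes P Q R x1 x2 x3 b1 b2 b3 :: "'a::comm_ring"
  assumes "x1 + P * b1 = x3 + P * b3" "x1 + Q * b1 = x2 + Q * b2" "x2 + R * b2 = x3 + R * b3"
  shows "(P - R) * (b3 - b2) = (Q - P) * (b2 - b1)"
proof -
  have "x1 - x3 = P * (b3 - b1)" "x1 - x2 = Q * (b2 - b1)" "x2 - x3 = R * (b3 - b2)"
    using assms by (simp_all add: algebra_simps)
  moreover have "x1 - x3 = (x1 - x2) + (x2 - x3)" by simp
  ultimately have "P * (b3 - b1) = Q * (b2 - b1) + R * (b3 - b2)" by simp
  then show ?thesis by (simp add: algebra_simps)
qed

lemma triangle_params_equal:
  fixes P Q R x1 x2 x3 y1 y2 y3 a1 a2 a3 :: "'a::field"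
  assumes PQ: "P \<noteq> Q" and QR: "Q \<noteq> R" and PR: "P \<noteq> R"
    and "x1 + P * a1 = x3 + P * a3" "x1 + Q * a1 = x2 + Q * a2" "x2 + R * a2 = x3 + R * a3"
    and "y1 + P * a1^2 = y3 + P * a3^2" "y1 + Q * a1^2 = y2 + Q * a2^2"
      "y2 + R * a2^2 = y3 + R * a3^2"
  shows "a1 = a2 \<and> a2 = a3"
proof -
  have lin: "(P - R) * (a3 - a2) = (Q - P) * (a2 - a1)"
    using assms(4-6) by (rule triangle_telescope)
  have "(P - R) * (a3^2 - a2^2) = (Q - P) * (a2^2 - a1^2)"
    using assms(7-9) by (rule triangle_telescope)
  then have "(P - R) * (a3 - a2) * (a3 + a2) = (Q - P) * (a2 - a1) * (a2 + a1)"
    by (simp add: algebra_simps power2_eq_square)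
  then have "(Q - P) * (a2 - a1) * (a3 + a2) = (Q - P) * (a2 - a1) * (a2 + a1)"
    by (simp add: lin)
  then have "(Q - P) * ((a2 - a1) * (a3 - a1)) = 0"
    by (simp add: algebra_simps)
  then consider "a2 = a1" | "a3 = a1"
    using PQ by auto
  then show ?thesis
  proof cases
    case 1
    then show ?thesis using lin PR by simp
  next
    case 2
    then have "(Q - R) * (a3 - a2) = 0" using lin by (simp add: algebra_simps)
    then show ?thesis using 2 QR by simp
  qed
qed

lemma hedge_triangle_collapse:
  assumes \<mu>: "\<mu> \<noteq> 0" and \<alpha>: "inj_on \<alpha> {1..r}"
    and "v1 \<noteq> v2" "v2 \<noteq> v3" "v1 \<noteq> v3"
    and "{v1, v2} \<subseteq> hedge \<alpha> r x1 y1 a1 \<mu>" "{v2, v3} \<subseteq> hedge \<alpha> r x2 y2 a2 \<mu>"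
      "{v3, v1} \<subseteq> hedge \<alpha> r x3 y3 a3 \<mu>"
  shows "hedge \<alpha> r x1 y1 a1 \<mu> = hedge \<alpha> r x3 y3 a3 \<mu>"
proof -
  obtain u1 w1 i u2 w2 j u3 w3 k
    where v: "v1 = (u1, w1, i)" "v2 = (u2, w2, j)" "v3 = (u3, w3, k)"
    by (metis prod_cases3)
  have layers: "i \<in> {1..r}" "j \<in> {1..r}" "k \<in> {1..r}"
    using assms(6-8) by (auto simp: v mem_hedge_iff)
  have "i \<noteq> j" "j \<noteq> k" "i \<noteq> k"
    using assms(3-8) by (auto simp: v mem_hedge_iff)
  then have "\<alpha> i * \<mu> \<noteq> \<alpha> j * \<mu>" "\<alpha> j * \<mu> \<noteq> \<alpha> k * \<mu>" "\<alpha> i * \<mu> \<noteq> \<alpha> k * \<mu>"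
    using \<mu> layers inj_onD[OF \<alpha>] by auto
  then have "a1 = a2 \<and> a2 = a3"
    by (rule triangle_params_equal) (use assms(6-8) in \<open>auto simp: v mem_hedge_iff\<close>)
  then show ?thesis
    using assms(6,8) hedge_eq_if_common_vertex[of v1] by auto
qed

theorem lemma3p6:
  fixes \<alpha> :: "nat \<Rightarrow> 'a::{field,finite}" and m :: "nat \<Rightarrow> 'a" and r l :: nat
  assumes q: "\<exists>p k. prime p \<and> odd p \<and> k \<ge> 1 \<and> card (UNIV :: 'a set) = p ^ k"
    and r: "r \<ge> 2" and l1: "l \<ge> 1"
    and alpha_inj: "inj_on \<alpha> {1..r}"
    and m_inj: "inj_on m {1..l}"
    and m_nz: "\<forall>s\<in>{1..l}. m s \<noteq> 0"
    and cond: "\<forall>s\<in>{1..l}. \<forall>t\<in>{1..l}. \<forall>i\<in>{1..r}. \<forall>j\<in>{1..r}. \<forall>k\<in>{1..r}.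
                 i \<noteq> j \<and> j \<noteq> k \<and> i \<noteq> k \<longrightarrow>
                 m s * (\<alpha> k - \<alpha> i) \<noteq> m t * (\<alpha> k - \<alpha> j)"
    and l_eq: "l = 1"
  shows "berge_C3_free (hedges \<alpha> r m l)"
  unfolding berge_C3_free_def
proof (rule notI, elim exE conjE)
  fix E1 E2 E3 v1 v2 v3
  assume "E1 \<in> hedges \<alpha> r m l" "E2 \<in> hedges \<alpha> r m l" "E3 \<in> hedges \<alpha> r m l"
    and "E1 \<noteq> E3" and triangle: "v1 \<noteq> v2" "v2 \<noteq> v3" "v1 \<noteq> v3"
      "{v1, v2} \<subseteq> E1" "{v2, v3} \<subseteq> E2" "{v3, v1} \<subseteq> E3"
  moreover obtain x1 y1 a1 x2 y2 a2 x3 y3 a3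
    where "E1 = hedge \<alpha> r x1 y1 a1 (m 1)" "E2 = hedge \<alpha> r x2 y2 a2 (m 1)"
      "E3 = hedge \<alpha> r x3 y3 a3 (m 1)"
    using calculation(1-3) l_eq by (auto simp: hedges_def)
  moreover have "m 1 \<noteq> 0" using m_nz l_eq by simp
  ultimately show False
    using hedge_triangle_collapse[OF _ alpha_inj triangle(1-3)] by auto
qed

end
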